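(* Let $\alpha>-1$ and define polynomials $a_i(x)$, $i=1,2,3,\ldots$, by $$a_i(x)=\frac{1}{i!}\sum_{j=1}^{i}(-1)^{i+j+1}\binom{\alpha+1}{j-1}\binom{\alpha+2}{i-j}(\alpha+3)_{i-j}\,x^j .$$ Then $$\sum_{i=1}^{\infty}a_i(x)=-\frac{\sin\pi\alpha}{\pi}\,\frac{x}{(\alpha+2)(\alpha+3)}\;{}_1F_1\!\left(\begin{matrix}1\\ \alpha+4\end{matrix};-x\right),\qquad \alpha>-1 .$$ Moreover, if $\alpha$ is a nonnegative integer, then for every $k=1,2,3,\ldots$ $$\sum_{i=k}^{\infty}\binom{i}{k}a_i(x)=(-1)^{\alpha+k}a_k(-x).$$
   Context: Here $(c)_m=c(c+1)\cdots(c+m-1)$ is the Pochhammer symbol, $\binom{a}{m}=\frac{a(a-1)\cdots(a-m+1)}{m!}$ is the generalized binomial coefficient for real $a$ and nonnegative integer $m$, and ${}_1F_1$ is the confluent hypergeometric function ${}_1F_1(a;b;z)=\sum_{m\ge0}\frac{(a)_m}{(b)_m m!}z^m$. (These $a_i(x)$ are the coefficients of the infinite order differential equation $M\sum_{i\ge0}a_i(x)y^{(i)}(x)+xy''(x)+(\alpha+1-x)y'(x)+ny(x)=0$ satisfied by the generalized Laguerre polynomials $L_n^{\alpha,M}(x)$ orthogonal with respect to $\frac{1}{\Gamma(\alpha+1)}x^\alpha e^{-x}$ on $[0,\infty)$ plus a point mass $M$ at $0$.) *)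

theory Defs
  imports Complex_Main
begin

definition hyp1F1 :: "real \<Rightarrow> real \<Rightarrow> real \<Rightarrow> real" where
  "hyp1F1 a b z = (\<Sum>m. pochhammer a m / (pochhammer b m * fact m) * z ^ m)"

definition a_coef :: "real \<Rightarrow> nat \<Rightarrow> real \<Rightarrow> real" where
  "a_coef \<alpha> i x = (1 / fact i) * (\<Sum>j=1..i. (-1) ^ (i + j + 1) * ((\<alpha> + 1) gchoose (j - 1))
      * ((\<alpha> + 2) gchoose (i - j)) * pochhammer (\<alpha> + 3) (i - j) * x ^ j)"

end

theory Submission
  imports Defs "HOL-Analysis.Analysis" "HOL-Computational_Algebra.Formal_Power_Series" "HOL-Real_Asymp.Real_Asymp"
begin

(*
  Put c_m = (-1)^m binom(alpha+2, m) (alpha+3)_m (inner_coef). Then a_(i+1)(x) is minus the antidiagonal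
  sum p + m = i of the double series  sum_(p,m) binom(alpha+1, p) x^(p+1) c_m / (m+p+1)!  (double_term),
  which converges absolutely for alpha > -1. Summing it by rows instead gives sum_j b_j x^j with
  b_j = -binom(alpha+1, j-1) S_j (row_coef), where S_j = sum_m c_m / (m+j)! (inner_sum).
  Summation by parts gives (j+alpha+3)(j-alpha-2) S_(j+1) = j S_j, hence b_j = -(j+alpha+3) b_(j+1), so
  (-1)^j Gamma(j+alpha+3) b_j does not depend on j. Its limit, computed from j! S_j -> 1 and the
  asymptotics of binomial coefficients and of Gamma, is 1/Gamma(-alpha-1); the reflection formula then
  turns sum_j b_j x^j into the 1F1 expression.
  For alpha = n everything is finite: S_g = 0 for 1 <= g <= n+2 because 1/Gamma(-n-1) = 0, and the
  remaining column sums of the binomially weighted double series are evaluated by Chu-Vandermonde.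
*)

section \<open>Factorial and binomial estimates\<close>

lemma gbinomial_Suc_eq:
  "(a :: 'a :: field_char_0) gchoose Suc k = (a - of_nat k) * (a gchoose k) / of_nat (Suc k)"
proof -
  have "of_nat (Suc k) \<noteq> (0 :: 'a)" by (rule of_nat_neq_0)
  with gbinomial_mult_1[of a k] show ?thesis by (simp add: field_simps del: of_nat_Suc)
qed

lemma abs_gbinomial_le: "\<bar>(c :: real) gchoose p\<bar> \<le> (\<bar>c\<bar> + 1) ^ p"
proof (induction p)
  case (Suc p)
  have "\<bar>c - real p\<bar> \<le> (\<bar>c\<bar> + 1) * (real p + 1)"
    by (simp add: algebra_simps abs_triangle_ineq4[THEN order_trans])
  then have "\<bar>c - real p\<bar> / (real p + 1) \<le> \<bar>c\<bar> + 1"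
    by (simp add: divide_simps mult.commute)
  then have "\<bar>c - real p\<bar> / (real p + 1) * \<bar>c gchoose p\<bar> \<le> (\<bar>c\<bar> + 1) * (\<bar>c\<bar> + 1) ^ p"
    by (rule mult_mono[OF _ Suc.IH]) simp_all
  also have "\<bar>c - real p\<bar> / (real p + 1) * \<bar>c gchoose p\<bar> = \<bar>c gchoose Suc p\<bar>"
    by (simp add: gbinomial_Suc_eq abs_mult)
  finally show ?case by simp
qed simp

lemma fact_mult_le_fact_add: "fact m * fact n \<le> (fact (m + n) :: 'a :: linordered_semidom)"
proof -
  have "fact m * fact n \<le> (fact (m + n) :: nat)"
    by (rule dvd_imp_le[OF fact_fact_dvd_fact]) simp
  then show ?thesis
    by (metis of_nat_fact of_nat_le_iff of_nat_mult)
qed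

lemma fact_add_lower_bound:
  assumes "m \<ge> 1" "j \<ge> 1"
  shows "real (j + 1) * fact (m + 1) * fact j \<le> 2 * fact (m + j)"
  using assms(1)
proof (induction m rule: dec_induct)
  case (step m)
  have "real (j + 1) * fact (Suc m + 1) * fact j = real (m + 2) * (real (j + 1) * fact (m + 1) * fact j)"
    by (simp add: algebra_simps)
  also have "\<dots> \<le> real (m + 2) * (2 * fact (m + j))"
    using step.IH by (rule mult_left_mono) simp
  also have "\<dots> \<le> real (Suc m + j) * (2 * fact (m + j))"
    using assms by (intro mult_right_mono) simp_all
  finally show ?case by simp
qed (simp add: algebra_simps)

lemma fact_le_pochhammer: "a \<ge> 1 \<Longrightarrow> fact m \<le> pochhammer (a :: real) m"
proof (induction m)
  case (Suc m)
  have "fact (Suc m) = (real m + 1) * fact m" by simp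
  also have "\<dots> \<le> (a + real m) * pochhammer a m"
    using Suc by (intro mult_mono) simp_all
  finally show ?case by (simp add: pochhammer_rec')
qed simp

lemma fact_add_eq_fact_mult_pochhammer:
  "fact (n + d) = (fact n * pochhammer (of_nat n + 1) d :: 'a :: {comm_semiring_1, semiring_char_0})"
  unfolding pochhammer_fact pochhammer_product' by (simp add: add.commute)

section \<open>The inner series\<close>

definition inner_coef :: "real \<Rightarrow> nat \<Rightarrow> real" where
  "inner_coef \<alpha> m = (-1) ^ m * ((\<alpha> + 2) gchoose m) * pochhammer (\<alpha> + 3) m"

definition inner_sum :: "real \<Rightarrow> nat \<Rightarrow> real" where
  "inner_sum \<alpha> j = (\<Sum>m. inner_coef \<alpha> m / fact (m + j))"

definition inner_majorant :: "real \<Rightarrow> nat \<Rightarrow> real" where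
  "inner_majorant \<alpha> m = \<bar>inner_coef \<alpha> m\<bar> / fact (m + 1)"

lemma inner_majorant_nonneg [simp]: "inner_majorant \<alpha> m \<ge> 0"
  by (simp add: inner_majorant_def)

lemma inner_coef_0 [simp]: "inner_coef \<alpha> 0 = 1"
  by (simp add: inner_coef_def)

lemma inner_coef_Suc:
  "inner_coef \<alpha> (Suc m) = inner_coef \<alpha> m * ((real m - (\<alpha> + 2)) * (real m + \<alpha> + 3) / (real m + 1))"
  unfolding inner_coef_def gbinomial_Suc_eq pochhammer_rec'
  by (simp add: field_simps)

lemma inner_majorant_Suc:
  assumes "\<alpha> > -1"
  shows "inner_majorant \<alpha> (Suc m) * ((real m + 1) * (real m + 2))
    = inner_majorant \<alpha> m * (\<bar>real m - (\<alpha> + 2)\<bar> * (real m + \<alpha> + 3))"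
proof -
  define r where "r = \<bar>real m - (\<alpha> + 2)\<bar> * (real m + \<alpha> + 3)"
  define F where "F = (fact (m + 1) :: real)"
  have "\<bar>inner_coef \<alpha> (Suc m)\<bar> = \<bar>inner_coef \<alpha> m\<bar> * r / (real m + 1)"
    using assms by (simp add: inner_coef_Suc r_def abs_mult)
  moreover have "fact (Suc m + 1) = (real m + 2) * F"
    by (simp add: F_def algebra_simps)
  ultimately have "inner_majorant \<alpha> (Suc m) = \<bar>inner_coef \<alpha> m\<bar> * r / (real m + 1) / ((real m + 2) * F)"
    unfolding inner_majorant_def by simp
  also have "\<dots> = inner_majorant \<alpha> m * r / ((real m + 1) * (real m + 2))"
    unfolding inner_majorant_def F_def by (simp add: field_simps)
  finally have "inner_majorant \<alpha> (Suc m) = inner_majorant \<alpha> m * r / ((real m + 1) * (real m + 2))" .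
  then show ?thesis
    by (simp add: r_def)
qed

text \<open>Beyond \<open>m = \<alpha> + 2\<close> the ratio of consecutive \<open>inner_majorant\<close> terms is
  \<open>(m (m + 1) - (\<alpha> + 2) (\<alpha> + 3)) / ((m + 1) (m + 2))\<close>, so the terms decay like \<open>1 / m\<^sup>2\<close>.\<close>
lemma inner_majorant_quadratic_decay:
  assumes "\<alpha> > -1"
  obtains K where "\<forall>\<^sub>F m in sequentially. inner_majorant \<alpha> m * (real m * (real m + 1)) \<le> K"
proof -
  define u where "u m = inner_majorant \<alpha> m * (real m * (real m + 1))" for m
  define M where "M = nat \<lceil>\<alpha> + 2\<rceil>"
  have M: "real M \<ge> \<alpha> + 2"
    unfolding M_def by linarith
  have step: "u (Suc m) \<le> u m" if "m \<ge> M" for m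
  proof -
    have "real m \<ge> \<alpha> + 2"
      using that M by linarith
    then have "\<bar>real m - (\<alpha> + 2)\<bar> * (real m + \<alpha> + 3) = real m * (real m + 1) - (\<alpha> + 2) * (\<alpha> + 3)"
      by (simp add: algebra_simps)
    also have "\<dots> \<le> real m * (real m + 1)"
      using assms by simp
    finally have le: "\<bar>real m - (\<alpha> + 2)\<bar> * (real m + \<alpha> + 3) \<le> real m * (real m + 1)" .
    have "u (Suc m) = inner_majorant \<alpha> (Suc m) * ((real m + 1) * (real m + 2))"
      by (simp add: u_def algebra_simps)
    also have "\<dots> = inner_majorant \<alpha> m * (\<bar>real m - (\<alpha> + 2)\<bar> * (real m + \<alpha> + 3))"
      by (rule inner_majorant_Suc[OF assms])
    also have "\<dots> \<le> u m"
      unfolding u_def by (rule mult_left_mono[OF le]) simp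
    finally show ?thesis .
  qed
  have "u m \<le> u M" if "m \<ge> M" for m
    using that by (induction m rule: dec_induct) (auto intro: order_trans[OF step])
  then show ?thesis
    by (intro that[of "u M"]) (auto simp: u_def eventually_at_top_linorder)
qed

lemma summable_inner_majorant:
  assumes "\<alpha> > -1"
  shows "summable (inner_majorant \<alpha>)"
proof -
  obtain K where K: "\<forall>\<^sub>F m in sequentially. inner_majorant \<alpha> m * (real m * (real m + 1)) \<le> K"
    using inner_majorant_quadratic_decay[OF assms] .
  show ?thesis
  proof (rule summable_comparison_test_ev)
    show "summable (\<lambda>m. K * inverse (real m ^ 2))"
      by (intro summable_mult inverse_power_summable) simp
    show "\<forall>\<^sub>F m in sequentially. norm (inner_majorant \<alpha> m) \<le> K * inverse (real m ^ 2)"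
      using K eventually_gt_at_top[of 0]
    proof eventually_elim
      case (elim m)
      have "inner_majorant \<alpha> m * real m ^ 2 \<le> inner_majorant \<alpha> m * (real m * (real m + 1))"
        by (intro mult_left_mono) (simp_all add: power2_eq_square mult_left_mono)
      with elim have "inner_majorant \<alpha> m \<le> K / real m ^ 2"
        by (simp add: pos_le_divide_eq)
      then show ?case
        by (simp add: divide_inverse)
    qed
  qed
qed

lemma inner_majorant_tendsto_0:
  assumes "\<alpha> > -1"
  shows "(\<lambda>m. real (m + 1) * inner_majorant \<alpha> m) \<longlonglongrightarrow> 0"
proof -
  obtain K where K: "\<forall>\<^sub>F m in sequentially. inner_majorant \<alpha> m * (real m * (real m + 1)) \<le> K"
    using inner_majorant_quadratic_decay[OF assms] .
  show ?thesis
  proof (rule tendsto_sandwich[OF _ _ tendsto_const])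
    have "(\<lambda>m. K * inverse (real m)) \<longlonglongrightarrow> K * 0"
      by (intro tendsto_intros lim_inverse_n)
    then show "(\<lambda>m. K * inverse (real m)) \<longlonglongrightarrow> 0"
      by simp
    show "\<forall>\<^sub>F m in sequentially. real (m + 1) * inner_majorant \<alpha> m \<le> K * inverse (real m)"
      using K eventually_gt_at_top[of 0]
    proof eventually_elim
      case (elim m)
      then have "real (m + 1) * inner_majorant \<alpha> m \<le> K / real m"
        by (simp add: pos_le_divide_eq mult_ac add.commute)
      then show ?case
        by (simp add: divide_inverse)
    qed
  qed (simp add: always_eventually)
qed

lemma abs_inner_term_le:
  assumes "\<alpha> > -1" "j \<ge> 1"
  shows "\<bar>inner_coef \<alpha> m / fact (m + j)\<bar> \<le> inner_majorant \<alpha> m"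
proof -
  have "fact (m + 1) \<le> (fact (m + j) :: real)"
    using assms by (intro fact_mono) simp
  then show ?thesis
    unfolding inner_majorant_def abs_divide abs_of_pos[OF fact_gt_zero]
    by (rule divide_left_mono) simp_all
qed

lemma summable_abs_inner_term:
  assumes "\<alpha> > -1" "j \<ge> 1"
  shows "summable (\<lambda>m. \<bar>inner_coef \<alpha> m / fact (m + j)\<bar>)"
  by (rule summable_comparison_test'[OF summable_inner_majorant[OF assms(1)], of 0])
     (simp only: real_norm_def abs_abs abs_inner_term_le[OF assms])

lemma inner_sum_sums:
  assumes "\<alpha> > -1" "j \<ge> 1"
  shows "(\<lambda>m. inner_coef \<alpha> m / fact (m + j)) sums inner_sum \<alpha> j"
  unfolding inner_sum_def
  by (rule summable_sums, rule summable_rabs_cancel, rule summable_abs_inner_term[OF assms])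

lemma inner_term_telescope:
  fixes \<alpha> :: real and j m :: nat
  defines "G \<equiv> \<lambda>m. real m * inner_coef \<alpha> m / fact (m + j)"
  shows "(real j + \<alpha> + 3) * (real j - \<alpha> - 2) * (inner_coef \<alpha> m / fact (m + Suc j))
      - real j * (inner_coef \<alpha> m / fact (m + j)) = G (Suc m) - G m"
proof -
  define A where "A = inner_coef \<alpha> m"
  define F where "F = (fact (m + j) :: real)"
  define D where "D = real m + real j + 1"
  have F: "F > 0" "fact (m + Suc j) = D * F" "fact (Suc m + j) = D * F"
    by (simp_all add: F_def D_def algebra_simps)
  have D: "D > 0"
    by (simp add: D_def add_pos_nonneg)
  have "(real j + \<alpha> + 3) * (real j - \<alpha> - 2) * (A / fact (m + Suc j)) - real j * (A / F)
      = A * ((real j + \<alpha> + 3) * (real j - \<alpha> - 2) - real j * D) / (D * F)"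
    unfolding F(2) using F(1) D by (simp add: field_simps)
  also have "(real j + \<alpha> + 3) * (real j - \<alpha> - 2) - real j * D
      = (real m - (\<alpha> + 2)) * (real m + \<alpha> + 3) - real m * D"
    by (simp add: D_def algebra_simps)
  also have "A * \<dots> / (D * F) = G (Suc m) - G m"
    unfolding G_def inner_coef_Suc A_def[symmetric] F_def[symmetric] F(3)
    using F D by (simp add: divide_simps) (simp add: algebra_simps)
  finally show ?thesis
    by (simp add: A_def F_def)
qed

text \<open>Summation by parts: the boundary terms \<open>m c\<^sub>m / (m + j)!\<close> tend to zero.\<close>
lemma inner_sum_recurrence:
  assumes "\<alpha> > -1" "j \<ge> 1"
  shows "(real j + \<alpha> + 3) * (real j - \<alpha> - 2) * inner_sum \<alpha> (Suc j) = real j * inner_sum \<alpha> j"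
proof -
  define G where "G m = real m * inner_coef \<alpha> m / fact (m + j)" for m
  have "(\<lambda>m. (real j + \<alpha> + 3) * (real j - \<alpha> - 2) * (inner_coef \<alpha> m / fact (m + Suc j))
      - real j * (inner_coef \<alpha> m / fact (m + j))) sums
      ((real j + \<alpha> + 3) * (real j - \<alpha> - 2) * inner_sum \<alpha> (Suc j) - real j * inner_sum \<alpha> j)"
    using assms by (intro sums_diff sums_mult inner_sum_sums) simp_all
  then have telescoped: "(\<lambda>m. G (Suc m) - G m) sums
      ((real j + \<alpha> + 3) * (real j - \<alpha> - 2) * inner_sum \<alpha> (Suc j) - real j * inner_sum \<alpha> j)"
    by (simp only: inner_term_telescope G_def)
  moreover have "G \<longlonglongrightarrow> 0"
  proof (rule tendsto_rabs_zero_cancel, rule tendsto_sandwich[OF _ _ tendsto_const inner_majorant_tendsto_0[OF assms(1)]])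
    show "\<forall>\<^sub>F m in sequentially. \<bar>G m\<bar> \<le> real (m + 1) * inner_majorant \<alpha> m"
    proof (intro always_eventually allI)
      fix m
      have "\<bar>G m\<bar> = real m * \<bar>inner_coef \<alpha> m / fact (m + j)\<bar>"
        by (simp add: G_def abs_mult)
      also have "\<dots> \<le> real (m + 1) * inner_majorant \<alpha> m"
        using abs_inner_term_le[OF assms] by (intro mult_mono) simp_all
      finally show "\<bar>G m\<bar> \<le> real (m + 1) * inner_majorant \<alpha> m" .
    qed
  qed simp
  then have "(\<lambda>m. G (Suc m) - G m) sums (0 - G 0)"
    by (rule telescope_sums)
  with telescoped have "(real j + \<alpha> + 3) * (real j - \<alpha> - 2) * inner_sum \<alpha> (Suc j) - real j * inner_sum \<alpha> j = 0 - G 0"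
    by (rule sums_unique2)
  then show ?thesis
    by (simp add: G_def)
qed

lemma fact_inner_sum_minus_1_bound:
  assumes "\<alpha> > -1" "j \<ge> 1"
  shows "\<bar>fact j * inner_sum \<alpha> j - 1\<bar> \<le> 2 / (real j + 1) * (\<Sum>m. inner_majorant \<alpha> (Suc m))"
proof -
  define f where "f m = fact j * (inner_coef \<alpha> (Suc m) / fact (Suc m + j))" for m
  have summable: "summable (\<lambda>m. inner_majorant \<alpha> (Suc m))"
    using summable_inner_majorant[OF assms(1)] by (subst summable_Suc_iff)
  have "(\<lambda>m. fact j * (inner_coef \<alpha> m / fact (m + j))) sums (fact j * inner_sum \<alpha> j)"
    using assms by (intro sums_mult inner_sum_sums)
  then have "f sums (fact j * inner_sum \<alpha> j - 1)"
    unfolding f_def by (subst sums_Suc_iff) simp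
  then have "\<bar>fact j * inner_sum \<alpha> j - 1\<bar> = norm (\<Sum>m. f m)"
    by (simp add: sums_iff)
  also have "\<dots> \<le> (\<Sum>m. 2 / (real j + 1) * inner_majorant \<alpha> (Suc m))"
  proof (rule norm_suminf_le)
    fix m
    have "real (j + 1) * fact (Suc m + 1) * fact j \<le> 2 * fact (Suc m + j)"
      using assms by (intro fact_add_lower_bound) simp_all
    then have "fact j / fact (Suc m + j) \<le> 2 / (real j + 1) / fact (Suc m + 1)"
      by (simp add: divide_simps mult_ac add.commute del: fact_Suc)
    then have "\<bar>inner_coef \<alpha> (Suc m)\<bar> * (fact j / fact (Suc m + j))
        \<le> \<bar>inner_coef \<alpha> (Suc m)\<bar> * (2 / (real j + 1) / fact (Suc m + 1))"
      by (rule mult_left_mono) simp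
    then show "norm (f m) \<le> 2 / (real j + 1) * inner_majorant \<alpha> (Suc m)"
      by (simp add: f_def inner_majorant_def abs_mult mult.commute)
  qed (rule summable_mult[OF summable])
  also have "\<dots> = 2 / (real j + 1) * (\<Sum>m. inner_majorant \<alpha> (Suc m))"
    by (rule suminf_mult[OF summable])
  finally show ?thesis .
qed

lemma fact_inner_sum_tendsto_1:
  assumes "\<alpha> > -1"
  shows "(\<lambda>j. fact j * inner_sum \<alpha> j) \<longlonglongrightarrow> 1"
proof -
  define V where "V = (\<Sum>m. inner_majorant \<alpha> (Suc m))"
  have lim: "(\<lambda>j. 2 / (real j + 1) * V) \<longlonglongrightarrow> 0"
    by real_asymp
  have bound: "\<forall>\<^sub>F j in sequentially. \<bar>fact j * inner_sum \<alpha> j - 1\<bar> \<le> 2 / (real j + 1) * V"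
    using eventually_ge_at_top
    by (rule eventually_mono) (unfold V_def, rule fact_inner_sum_minus_1_bound[OF assms])
  have "(\<lambda>j. \<bar>fact j * inner_sum \<alpha> j - 1\<bar>) \<longlonglongrightarrow> 0"
    by (rule tendsto_sandwich[OF _ bound tendsto_const lim]) simp
  then have "(\<lambda>j. fact j * inner_sum \<alpha> j - 1) \<longlonglongrightarrow> 0"
    by (simp only: tendsto_rabs_zero_iff)
  then show ?thesis
    by (rule LIM_zero_cancel)
qed

section \<open>The row coefficients\<close>

definition row_coef :: "real \<Rightarrow> nat \<Rightarrow> real" where
  "row_coef \<alpha> j = - ((\<alpha> + 1) gchoose (j - 1)) * inner_sum \<alpha> j"

lemma row_coef_rec:
  assumes "\<alpha> > -1" "j \<ge> 1"
  shows "(real j + \<alpha> + 3) * row_coef \<alpha> (Suc j) = - row_coef \<alpha> j"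
proof -
  have binom: "real j * ((\<alpha> + 1) gchoose j) = (\<alpha> + 2 - real j) * ((\<alpha> + 1) gchoose (j - 1))"
    using assms(2) by (cases j) (simp_all add: gbinomial_Suc_eq field_simps)
  have "real j * ((real j + \<alpha> + 3) * row_coef \<alpha> (Suc j))
      = - (real j + \<alpha> + 3) * inner_sum \<alpha> (Suc j) * (real j * ((\<alpha> + 1) gchoose j))"
    by (simp add: row_coef_def algebra_simps)
  also have "\<dots> = ((\<alpha> + 1) gchoose (j - 1)) * ((real j + \<alpha> + 3) * (real j - \<alpha> - 2) * inner_sum \<alpha> (Suc j))"
    unfolding binom by (simp add: algebra_simps)
  also have "\<dots> = real j * - row_coef \<alpha> j"
    by (simp add: inner_sum_recurrence[OF assms] row_coef_def)
  finally have "real j * ((real j + \<alpha> + 3) * row_coef \<alpha> (Suc j)) = real j * - row_coef \<alpha> j" .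
  then show ?thesis
    using assms(2) by (simp only: mult_cancel_left) simp
qed

lemma pos_notin_nonpos_Ints: "(x :: real) > 0 \<Longrightarrow> x \<notin> \<int>\<^sub>\<le>\<^sub>0"
  using nonpos_Ints_nonpos by fastforce

lemma gbinomial_asymptotic_real:
  fixes a :: real
  shows   "(\<lambda>n. (a gchoose n) * (-1) ^ n * exp ((a + 1) * ln (real n))) \<longlonglongrightarrow> rGamma (- a)"
proof -
  have "(a gchoose n) / ((-1) ^ n / exp ((a + 1) * of_real (ln (real n))))
      = (a gchoose n) * (-1) ^ n * exp ((a + 1) * ln (real n))" for n
    by (cases "even n") simp_all
  with gbinomial_asymptotic[of a] show ?thesis
    by (simp add: rGamma_inverse_Gamma)
qed

lemma Gamma_asymptotic:
  fixes a :: real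
  assumes "a > 0"
  shows "(\<lambda>n. Gamma (real n + a) * exp (- (a - 1) * ln (real n)) / fact n) \<longlonglongrightarrow> 1"
proof -
  have a: "a \<notin> \<int>\<^sub>\<le>\<^sub>0"
    using assms by (rule pos_notin_nonpos_Ints)
  then have Gamma_a: "Gamma a \<noteq> 0"
    by (rule Gamma_nonzero)
  have "(- a) gchoose n = (-1) ^ n * (Gamma (real n + a) / Gamma a) / fact n" for n :: nat
    by (simp add: gbinomial_pochhammer pochhammer_Gamma[OF a] add.commute)
  then have "((- a) gchoose n) / ((-1) ^ n / exp ((- a + 1) * of_real (ln (real n))))
      = Gamma (real n + a) * exp (- (a - 1) * ln (real n)) / fact n / Gamma a" for n :: nat
    by (cases "even n") (simp_all add: field_simps)
  with gbinomial_asymptotic[of "- a"]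
  have "(\<lambda>n. Gamma (real n + a) * exp (- (a - 1) * ln (real n)) / fact n / Gamma a) \<longlonglongrightarrow> inverse (Gamma a)"
    by simp
  then have "(\<lambda>n. Gamma (real n + a) * exp (- (a - 1) * ln (real n)) / fact n / Gamma a * Gamma a)
      \<longlonglongrightarrow> inverse (Gamma a) * Gamma a"
    by (rule tendsto_mult_right)
  with Gamma_a show ?thesis
    by simp
qed


lemma Gamma_fact_Suc_asymptotic:
  fixes a :: real
  assumes "a > 0"
  shows "(\<lambda>n. Gamma (real n + a) / (fact (Suc n) * exp ((a - 2) * ln (real n)))) \<longlonglongrightarrow> 1"
proof -
  have "(\<lambda>n. Gamma (real n + a) * exp (- (a - 1) * ln (real n)) / fact n * (real n / real (Suc n))) \<longlonglongrightarrow> 1 * 1"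
    using assms by (intro tendsto_mult Gamma_asymptotic LIMSEQ_n_over_Suc_n)
  moreover have "\<forall>\<^sub>F n in sequentially.
      Gamma (real n + a) * exp (- (a - 1) * ln (real n)) / fact n * (real n / real (Suc n))
      = Gamma (real n + a) / (fact (Suc n) * exp ((a - 2) * ln (real n)))"
    using eventually_gt_at_top[of 0]
  proof eventually_elim
    case (elim n)
    define G where "G = Gamma (real n + a)"
    define E where "E = exp (- (a - 1) * ln (real n))"
    define P where "P = exp ((a - 2) * ln (real n))"
    define F where "F = (fact n :: real)"
    define N where "N = real (Suc n)"
    have "E * real n = exp (- (a - 1) * ln (real n) + ln (real n))"
      using elim by (simp add: E_def exp_add)
    also have "\<dots> = inverse P"
      by (simp add: P_def algebra_simps flip: exp_minus)
    finally have E_eq: "E = inverse P / real n"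
      using elim by (simp add: eq_divide_eq)
    have "F > 0" "P > 0" "N > 0" "real n > 0" "fact (Suc n) = N * F"
      using elim by (simp_all add: F_def P_def N_def)
    then show ?case
      unfolding G_def[symmetric] E_def[symmetric] P_def[symmetric] F_def[symmetric] N_def[symmetric] E_eq
      by (simp add: field_simps)
  qed
  ultimately show ?thesis
    by (simp add: tendsto_cong)
qed

lemma row_coef_scaled_tendsto:
  assumes "\<alpha> > -1"
  shows "(\<lambda>n. (-1) ^ Suc n * Gamma (real n + \<alpha> + 4) * row_coef \<alpha> (Suc n)) \<longlonglongrightarrow> rGamma (- \<alpha> - 1)"
proof -
  define P where "P n = exp ((\<alpha> + 2) * ln (real n))" for n
  have "(\<lambda>n. ((\<alpha> + 1) gchoose n) * (-1) ^ n * P n) \<longlonglongrightarrow> rGamma (- \<alpha> - 1)"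
    using gbinomial_asymptotic_real[of "\<alpha> + 1"] by (simp add: P_def add.assoc)
  moreover have "(\<lambda>n. fact (Suc n) * inner_sum \<alpha> (Suc n)) \<longlonglongrightarrow> 1"
    using fact_inner_sum_tendsto_1[OF assms] by (rule LIMSEQ_Suc)
  moreover have "(\<lambda>n. Gamma (real n + \<alpha> + 4) / (fact (Suc n) * P n)) \<longlonglongrightarrow> 1"
  proof -
    have "\<alpha> + 4 > 0" "\<alpha> + 4 - 2 = \<alpha> + 2"
      using assms by simp_all
    with Gamma_fact_Suc_asymptotic[of "\<alpha> + 4"] show ?thesis
      by (simp only: P_def add.assoc[symmetric])
  qed
  ultimately have "(\<lambda>n. (((\<alpha> + 1) gchoose n) * (-1) ^ n * P n) * (fact (Suc n) * inner_sum \<alpha> (Suc n))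
      * (Gamma (real n + \<alpha> + 4) / (fact (Suc n) * P n))) \<longlonglongrightarrow> rGamma (- \<alpha> - 1) * 1 * 1"
    by (intro tendsto_mult)
  moreover have "((\<alpha> + 1) gchoose n) * (-1) ^ n * P n * (fact (Suc n) * inner_sum \<alpha> (Suc n))
      * (Gamma (real n + \<alpha> + 4) / (fact (Suc n) * P n))
      = (-1) ^ Suc n * Gamma (real n + \<alpha> + 4) * row_coef \<alpha> (Suc n)" for n
    by (simp add: P_def row_coef_def)
  ultimately show ?thesis
    by simp
qed

text \<open>The recurrence makes the scaled coefficients constant, so they equal their limit.\<close>
lemma row_coef_scaled_eq:
  assumes "\<alpha> > -1"
  shows "(-1) ^ Suc n * Gamma (real n + \<alpha> + 4) * row_coef \<alpha> (Suc n) = rGamma (- \<alpha> - 1)"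
proof -
  define w where "w n = (-1) ^ Suc n * Gamma (real n + \<alpha> + 4) * row_coef \<alpha> (Suc n)" for n
  have step: "w (Suc n) = w n" for n
  proof -
    have Gamma_eq: "Gamma (real (Suc n) + \<alpha> + 4) = (real n + \<alpha> + 4) * Gamma (real n + \<alpha> + 4)"
      using Gamma_plus1[of "real n + \<alpha> + 4"] assms by (simp add: pos_notin_nonpos_Ints add_ac)
    have "real (Suc n) + \<alpha> + 3 = real n + \<alpha> + 4"
      by simp
    with row_coef_rec[OF assms, of "Suc n"]
    have rec: "(real n + \<alpha> + 4) * row_coef \<alpha> (Suc (Suc n)) = - row_coef \<alpha> (Suc n)"
      by (simp only:)
    have "w (Suc n) = - ((-1) ^ Suc n * Gamma (real n + \<alpha> + 4) * ((real n + \<alpha> + 4) * row_coef \<alpha> (Suc (Suc n))))"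
      unfolding w_def Gamma_eq by (simp add: mult_ac)
    also have "\<dots> = w n"
      unfolding rec w_def by simp
    finally show ?thesis .
  qed
  have "w n = w 0" for n
    by (induction n) (simp_all add: step)
  then have "w = (\<lambda>_. w 0)"
    by (rule ext)
  moreover have "w \<longlonglongrightarrow> rGamma (- \<alpha> - 1)"
    unfolding w_def by (rule row_coef_scaled_tendsto[OF assms])
  ultimately show ?thesis
    using LIMSEQ_unique[OF tendsto_const] by (metis w_def)
qed

lemma row_coef_closed_form:
  assumes "\<alpha> > -1"
  shows "row_coef \<alpha> (Suc n) = rGamma (- \<alpha> - 1) * (-1) ^ Suc n * rGamma (real n + \<alpha> + 4)"
proof -
  define s where "s = (-1 :: real) ^ Suc n"
  define G where "G = Gamma (real n + \<alpha> + 4)"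
  have scaled: "s * G * row_coef \<alpha> (Suc n) = rGamma (- \<alpha> - 1)"
    unfolding s_def G_def by (rule row_coef_scaled_eq[OF assms])
  have "s * s = 1"
    by (simp add: s_def flip: power_mult_distrib)
  moreover have "G * rGamma (real n + \<alpha> + 4) = 1"
    using Gamma_nonzero[OF pos_notin_nonpos_Ints] assms by (simp add: G_def rGamma_inverse_Gamma)
  ultimately have "row_coef \<alpha> (Suc n) = s * rGamma (real n + \<alpha> + 4) * (s * G * row_coef \<alpha> (Suc n))"
    by (metis mult.assoc mult.left_commute mult_1)
  also have "\<dots> = s * rGamma (real n + \<alpha> + 4) * rGamma (- \<alpha> - 1)"
    unfolding scaled ..
  finally show ?thesis
    by (simp only: s_def mult_ac)
qed

lemma rGamma_reflection_real: "rGamma x * rGamma (1 - x) = sin (pi * x) / pi"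
proof -
  have "complex_of_real (rGamma x * rGamma (1 - x)) = complex_of_real (sin (pi * x) / pi)"
    using rGamma_reflection_complex[of "complex_of_real x"]
    by (simp flip: rGamma_complex_of_real sin_of_real)
  then show ?thesis
    by (simp only: of_real_eq_iff)
qed

section \<open>The double series\<close>

lemma sums_antidiagonal:
  fixes f :: "nat \<Rightarrow> nat \<Rightarrow> 'a :: {topological_comm_monoid_add, t3_space}"
  assumes "((\<lambda>(p, m). f p m) has_sum s) UNIV"
  shows "(\<lambda>k. \<Sum>p\<le>k. f p (k - p)) sums s"
proof -
  have "((\<lambda>(p, m). f p m) has_sum s) UNIV = ((\<lambda>(k, p). f p (k - p)) has_sum s) (SIGMA k:UNIV. {..k})"
    by (rule has_sum_reindex_bij_witness[where i = "\<lambda>(k, p). (p, k - p)" and j = "\<lambda>(p, m). (p + m, p)"]) auto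
  with assms have "((\<lambda>(k, p). f p (k - p)) has_sum s) (SIGMA k:UNIV. {..k})"
    by simp
  then have "((\<lambda>k. \<Sum>p\<le>k. f p (k - p)) has_sum s) UNIV"
    by (rule has_sum_SigmaD) (simp add: has_sum_finiteI)
  then show ?thesis
    by (rule has_sum_imp_sums)
qed

lemma summable_on_times_nonneg:
  fixes u v :: "nat \<Rightarrow> real"
  assumes "summable u" "summable v" "\<And>p. u p \<ge> 0" "\<And>m. v m \<ge> 0"
  shows "(\<lambda>(p, m). u p * v m) summable_on UNIV"
proof -
  have rows: "((\<lambda>m. u p * v m) has_sum u p * suminf v) UNIV" for p
    using assms by (intro norm_summable_imp_has_sum sums_mult summable_sums) (simp_all add: summable_mult)
  have "(\<lambda>p. u p * suminf v) summable_on UNIV"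
    using assms by (intro norm_summable_imp_summable_on) (simp add: summable_mult2 abs_mult suminf_nonneg)
  then have "(\<lambda>(p, m). u p * v m) summable_on (SIGMA p:UNIV. UNIV)"
    by (intro summable_on_SigmaI[where g = "\<lambda>p. u p * suminf v"]) (use rows assms in auto)
  then show ?thesis
    by simp
qed

definition double_term :: "real \<Rightarrow> real \<Rightarrow> nat \<Rightarrow> nat \<Rightarrow> real" where
  "double_term \<alpha> x p m = ((\<alpha> + 1) gchoose p) * x ^ Suc p * (inner_coef \<alpha> m / fact (m + Suc p))"

lemma a_coef_antidiagonal: "a_coef \<alpha> (Suc i) x = - (\<Sum>p\<le>i. double_term \<alpha> x p (i - p))"
proof -
  have "a_coef \<alpha> (Suc i) x = (1 / fact (Suc i)) * (\<Sum>p\<le>i. (-1) ^ (Suc i + Suc p + 1)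
      * ((\<alpha> + 1) gchoose p) * ((\<alpha> + 2) gchoose (i - p)) * pochhammer (\<alpha> + 3) (i - p) * x ^ Suc p)"
  proof -
    have shift: "(\<Sum>j = 1..Suc i. g j) = (\<Sum>p = 0..i. g (Suc p))" for g :: "nat \<Rightarrow> real"
      using sum.shift_bounds_cl_Suc_ivl[of g 0 i] by simp
    show ?thesis
      unfolding a_coef_def shift atMost_atLeast0 by simp
  qed
  also have "\<dots> = (\<Sum>p\<le>i. - double_term \<alpha> x p (i - p))"
    unfolding sum_distrib_left
  proof (rule sum.cong[OF refl])
    fix p assume "p \<in> {..i}"
    then obtain d where i: "i = p + d"
      by (auto simp: le_iff_add)
    have "(-1::real) ^ (Suc i + Suc p + 1) = - ((-1) ^ d)"
      unfolding i by (simp add: power_add flip: mult_2)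
    then show "1 / fact (Suc i) * ((-1) ^ (Suc i + Suc p + 1) * ((\<alpha> + 1) gchoose p)
        * ((\<alpha> + 2) gchoose (i - p)) * pochhammer (\<alpha> + 3) (i - p) * x ^ Suc p) = - double_term \<alpha> x p (i - p)"
      by (simp add: double_term_def inner_coef_def i add.commute)
  qed
  finally show ?thesis
    by (simp add: sum_negf)
qed

lemma abs_double_term_le:
  assumes "\<alpha> > -1"
  shows "\<bar>double_term \<alpha> x p m\<bar> \<le> \<bar>x\<bar> * ((\<bar>\<alpha> + 1\<bar> + 1) * \<bar>x\<bar>) ^ p / fact p * inner_majorant \<alpha> m"
proof -
  have "fact (m + 1) * fact p \<le> (fact (m + Suc p) :: real)"
    using fact_mult_le_fact_add[of "m + 1" p] by simp
  then have "\<bar>inner_coef \<alpha> m / fact (m + Suc p)\<bar> \<le> inner_majorant \<alpha> m / fact p"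
    unfolding inner_majorant_def abs_divide abs_of_pos[OF fact_gt_zero] divide_divide_eq_left
    by (rule divide_left_mono) simp_all
  then have "\<bar>double_term \<alpha> x p m\<bar> \<le> (\<bar>\<alpha> + 1\<bar> + 1) ^ p * (\<bar>x\<bar> * \<bar>x\<bar> ^ p) * (inner_majorant \<alpha> m / fact p)"
    unfolding double_term_def abs_mult power_abs
    by (intro mult_mono abs_gbinomial_le) simp_all
  then show ?thesis
    by (simp add: power_mult_distrib mult_ac)
qed

lemma summable_on_double_term:
  assumes "\<alpha> > -1"
  shows "(\<lambda>(p, m). double_term \<alpha> x p m) summable_on UNIV"
proof -
  define u where "u p = \<bar>x\<bar> * (inverse (fact p) * ((\<bar>\<alpha> + 1\<bar> + 1) * \<bar>x\<bar>) ^ p)" for p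
  have "summable u"
    unfolding u_def by (rule summable_mult[OF summable_exp])
  then have "(\<lambda>(p, m). u p * inner_majorant \<alpha> m) summable_on UNIV"
    by (rule summable_on_times_nonneg[OF _ summable_inner_majorant[OF assms]]) (simp_all add: u_def)
  then have "(\<lambda>pm. norm ((\<lambda>(p, m). double_term \<alpha> x p m) pm)) summable_on UNIV"
    by (rule Infinite_Sum.abs_summable_on_comparison_test') (use abs_double_term_le[OF assms] in \<open>auto simp: u_def field_simps\<close>)
  then show ?thesis
    by (rule Infinite_Sum.abs_summable_summable)
qed

lemma a_coef_sums_of_row_series:
  assumes "\<alpha> > -1" "(\<lambda>p. row_coef \<alpha> (Suc p) * x ^ Suc p) sums s"
  shows "(\<lambda>i. a_coef \<alpha> (Suc i) x) sums s"
proof -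
  obtain T where T: "((\<lambda>(p, m). double_term \<alpha> x p m) has_sum T) UNIV"
    using summable_on_double_term[OF assms(1)] by (auto simp: summable_on_def)
  have rows: "((\<lambda>m. double_term \<alpha> x p m) has_sum - (row_coef \<alpha> (Suc p) * x ^ Suc p)) UNIV" for p
  proof (rule norm_summable_imp_has_sum)
    show "summable (\<lambda>m. norm (double_term \<alpha> x p m))"
      using summable_mult[OF summable_abs_inner_term[OF assms(1), of "Suc p"], of "\<bar>((\<alpha> + 1) gchoose p) * x ^ Suc p\<bar>"]
      by (simp add: double_term_def abs_mult mult.assoc)
    have "(\<lambda>m. ((\<alpha> + 1) gchoose p) * x ^ Suc p * (inner_coef \<alpha> m / fact (m + Suc p)))
        sums (((\<alpha> + 1) gchoose p) * x ^ Suc p * inner_sum \<alpha> (Suc p))"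
      by (rule sums_mult[OF inner_sum_sums[OF assms(1)]]) simp
    then show "(\<lambda>m. double_term \<alpha> x p m) sums - (row_coef \<alpha> (Suc p) * x ^ Suc p)"
      by (simp add: double_term_def row_coef_def mult_ac)
  qed
  have "((\<lambda>(p, m). double_term \<alpha> x p m) has_sum T) (SIGMA p:UNIV. UNIV)"
    using T by simp
  then have "((\<lambda>p. - (row_coef \<alpha> (Suc p) * x ^ Suc p)) has_sum T) UNIV"
    by (rule has_sum_Sigma') (use rows in simp)
  then have "(\<lambda>p. - (row_coef \<alpha> (Suc p) * x ^ Suc p)) sums T"
    by (rule has_sum_imp_sums)
  from sums_minus[OF this] have "(\<lambda>p. row_coef \<alpha> (Suc p) * x ^ Suc p) sums - T"
    by simp
  with assms(2) have "s = - T"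
    by (rule sums_unique2)
  moreover have "(\<lambda>k. \<Sum>p\<le>k. double_term \<alpha> x p (k - p)) sums T"
    using T by (rule sums_antidiagonal)
  ultimately show ?thesis
    unfolding a_coef_antidiagonal by (simp add: sums_minus)
qed

section \<open>The row series\<close>

lemma hyp1F1_1_sums:
  assumes "b \<ge> 1"
  shows "(\<lambda>m. z ^ m / pochhammer b m) sums hyp1F1 1 b z"
proof -
  have "summable (\<lambda>m. z ^ m / pochhammer b m)"
  proof (rule summable_comparison_test'[OF summable_exp[of "\<bar>z\<bar>"], of 0])
    fix m :: nat
    have "pochhammer b m > 0"
      using assms by (simp add: pochhammer_pos)
    moreover have "\<bar>z\<bar> ^ m / pochhammer b m \<le> \<bar>z\<bar> ^ m / fact m"
      using assms \<open>pochhammer b m > 0\<close> by (intro divide_left_mono fact_le_pochhammer) simp_all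
    ultimately show "norm (z ^ m / pochhammer b m) \<le> inverse (fact m) * \<bar>z\<bar> ^ m"
      by (simp add: abs_divide power_abs field_simps)
  qed
  then show ?thesis
    by (simp add: hyp1F1_def summable_sums flip: pochhammer_fact)
qed

lemma row_coef_term:
  assumes "\<alpha> > -1"
  shows "row_coef \<alpha> (Suc m) * x ^ Suc m
    = - (sin (pi * \<alpha>) / pi) * (x / ((\<alpha> + 2) * (\<alpha> + 3))) * ((- x) ^ m / pochhammer (\<alpha> + 4) m)"
proof -
  define c where "c = (\<alpha> + 2) * (\<alpha> + 3)"
  define P where "P = pochhammer (\<alpha> + 4) m"
  define R where "R = rGamma (real m + \<alpha> + 4)"
  define K where "K = rGamma (- \<alpha> - 1)"
  have "c \<noteq> 0" "P \<noteq> 0"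
    using assms by (simp_all add: c_def P_def pochhammer_eq_0_iff)
  have "rGamma (\<alpha> + 2) = pochhammer (\<alpha> + 2) (Suc (Suc m)) * rGamma (\<alpha> + 2 + real (Suc (Suc m)))"
    by (rule pochhammer_rGamma)
  also have "\<dots> = c * P * R"
    by (simp add: c_def P_def R_def pochhammer_rec add_ac mult.assoc)
  finally have "rGamma (\<alpha> + 2) = c * P * R" .
  moreover have "K * rGamma (\<alpha> + 2) = sin (pi * \<alpha>) / pi"
  proof -
    have "sin (pi * (\<alpha> + 2)) = sin (pi * \<alpha>)"
      using sin_periodic[of "pi * \<alpha>"] by (simp add: distrib_left mult.commute)
    moreover have "1 - (\<alpha> + 2) = - \<alpha> - 1"
      by simp
    ultimately show ?thesis
      using rGamma_reflection_real[of "\<alpha> + 2"] by (metis K_def mult.commute)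
  qed
  ultimately have sin_eq: "sin (pi * \<alpha>) / pi = K * (c * P * R)"
    by simp
  have "row_coef \<alpha> (Suc m) * x ^ Suc m = K * (-1) ^ Suc m * R * x ^ Suc m"
    by (simp add: row_coef_closed_form[OF assms] K_def R_def)
  also have "\<dots> = - (K * (c * P * R)) * (x / c) * ((- x) ^ m / P)"
    using \<open>c \<noteq> 0\<close> \<open>P \<noteq> 0\<close> by (simp add: power_minus[of x] field_simps)
  finally show ?thesis
    by (simp only: sin_eq c_def P_def)
qed

lemma row_series_sums:
  assumes "\<alpha> > -1"
  shows "(\<lambda>p. row_coef \<alpha> (Suc p) * x ^ Suc p) sums
    (- (sin (pi * \<alpha>) / pi) * (x / ((\<alpha> + 2) * (\<alpha> + 3))) * hyp1F1 1 (\<alpha> + 4) (- x))"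
  unfolding row_coef_term[OF assms]
  by (rule sums_mult, rule hyp1F1_1_sums) (use assms in simp)

section \<open>Integer parameter\<close>

lemma gbinomial_Vandermonde_tail:
  fixes b :: real
  assumes "d \<le> N"
  shows "(\<Sum>t\<le>N - d. real ((N - d) choose t) * (b gchoose (d + t))) = (real (N - d) + b) gchoose N"
proof -
  define M where "M = N - d"
  have "(real M + b) gchoose N = (\<Sum>k=0..N. (real M gchoose k) * (b gchoose (N - k)))"
    by (rule gbinomial_Vandermonde[symmetric])
  also have "\<dots> = (\<Sum>k\<le>M. (real M gchoose k) * (b gchoose (N - k)))"
    unfolding atLeast0AtMost
    by (rule sum.mono_neutral_right) (auto simp: M_def simp flip: binomial_gbinomial)
  also have "\<dots> = (\<Sum>t\<le>M. (real M gchoose (M - t)) * (b gchoose (N - (M - t))))"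
    by (rule sum.reindex_bij_witness[where i = "\<lambda>k. M - k" and j = "\<lambda>t. M - t"]) auto
  also have "\<dots> = (\<Sum>t\<le>M. real (M choose t) * (b gchoose (d + t)))"
  proof (rule sum.cong[OF refl])
    fix t assume "t \<in> {..M}"
    then have "N - (M - t) = d + t" "real M gchoose (M - t) = real (M choose t)"
      using assms by (simp add: M_def, metis atMost_iff binomial_gbinomial binomial_symmetric)
    then show "(real M gchoose (M - t)) * (b gchoose (N - (M - t))) = real (M choose t) * (b gchoose (d + t))"
      by simp
  qed
  finally show ?thesis
    by (simp add: M_def)
qed

lemma alternating_binomial_pochhammer_term:
  assumes "d \<le> m" "m \<le> N"
  shows "(-1) ^ m * real (N choose m) * pochhammer (real N + 1) m / fact (m - d)
    = fact d * real (N choose d) * (real ((N - d) choose (m - d)) * ((- (real N + 1)) gchoose m))"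
proof -
  have choose: "real (N choose d) * real ((N - d) choose (m - d)) = real (N choose m) * real (m choose d)"
    using choose_mult[OF assms] by (simp flip: of_nat_mult)
  have gchoose: "(- (real N + 1)) gchoose m = (-1) ^ m * pochhammer (real N + 1) m / fact m"
    by (simp add: gbinomial_pochhammer add.commute)
  have "fact d * (real (N choose d) * real ((N - d) choose (m - d))) * ((- (real N + 1)) gchoose m)
      = (-1) ^ m * real (N choose m) * pochhammer (real N + 1) m / fact (m - d)"
    unfolding choose gchoose binomial_fact[OF assms(1)] by (simp add: field_simps)
  then show ?thesis
    by (simp add: mult_ac)
qed

lemma alternating_binomial_pochhammer_sum:
  "(\<Sum>m=d..N. (-1) ^ m * real (N choose m) * pochhammer (real N + 1) m / fact (m - d))
    = (-1) ^ N * real (N choose d) * pochhammer (real N + 1) d"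
proof (cases "d \<le> N")
  case True
  have "(\<Sum>m=d..N. (-1) ^ m * real (N choose m) * pochhammer (real N + 1) m / fact (m - d))
      = fact d * real (N choose d) * (\<Sum>m=d..N. real ((N - d) choose (m - d)) * ((- (real N + 1)) gchoose m))"
    unfolding sum_distrib_left by (rule sum.cong) (simp_all add: alternating_binomial_pochhammer_term)
  also have "(\<Sum>m=d..N. real ((N - d) choose (m - d)) * ((- (real N + 1)) gchoose m))
      = (\<Sum>t\<le>N - d. real ((N - d) choose t) * ((- (real N + 1)) gchoose (d + t)))"
    by (rule sum.reindex_bij_witness[where i = "\<lambda>t. d + t" and j = "\<lambda>m. m - d"]) (use True in auto)
  also have "\<dots> = (- (real d + 1)) gchoose N"
  proof -
    have "real (N - d) + - (real N + 1) = - (real d + 1)"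
      using True by (simp add: of_nat_diff)
    then show ?thesis
      using gbinomial_Vandermonde_tail[OF True, of "- (real N + 1)"] by simp
  qed
  also have "\<dots> = (-1) ^ N * real ((N + d) choose N)"
    unfolding gbinomial_minus[of "real d + 1"] by (simp add: binomial_gbinomial add_ac)
  also have "fact d * real (N choose d) * ((-1) ^ N * real ((N + d) choose N))
      = (-1) ^ N * real (N choose d) * (fact d * real ((N + d) choose N))"
    by (simp add: mult_ac)
  also have "fact d * real ((N + d) choose N) = pochhammer (real N + 1) d"
    by (simp add: binomial_fact fact_add_eq_fact_mult_pochhammer)
  finally show ?thesis .
qed simp

lemma inner_coef_of_nat:
  "inner_coef (real n) m = (-1) ^ m * real ((n + 2) choose m) * pochhammer (real (n + 2) + 1) m"
  by (simp add: inner_coef_def binomial_gbinomial add_ac)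

lemma inner_coef_of_nat_eq_0: "n + 2 < m \<Longrightarrow> inner_coef (real n) m = 0"
  by (simp add: inner_coef_of_nat)

lemma inner_coef_of_nat_shifted_sum:
  "(\<Sum>m=d..n + 2. inner_coef (real n) m / fact (m - d)) = (-1) ^ (n + d) * inner_coef (real n) d"
proof -
  have sign: "(-1::real) ^ (n + 2) = (-1) ^ (n + d) * (-1) ^ d"
    by (simp add: power_add flip: power_mult_distrib)
  show ?thesis
    unfolding inner_coef_of_nat alternating_binomial_pochhammer_sum sign by (simp only: mult_ac)
qed

lemma inner_sum_of_nat:
  assumes "j \<ge> 1"
  shows "inner_sum (real n) j = (\<Sum>m\<le>n + 2. inner_coef (real n) m / fact (m + j))"
  unfolding inner_sum_def by (rule suminf_finite) (auto simp: inner_coef_of_nat_eq_0)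

lemma gbinomial_of_nat_add_1: "(real n + 1) gchoose p = real ((n + 1) choose p)"
  using binomial_gbinomial[of "n + 1" p, where 'a = real] by (simp add: add.commute)

text \<open>For \<open>\<alpha> = n\<close> the factor \<open>1 / \<Gamma>(-\<alpha> - 1)\<close> of the closed form vanishes.\<close>
lemma inner_sum_of_nat_eq_0:
  assumes "1 \<le> g" "g \<le> n + 2"
  shows "inner_sum (real n) g = 0"
proof -
  obtain k where g: "g = Suc k"
    using assms(1) by (cases g) auto
  have "- real n - 1 = - real (n + 1)"
    by simp
  then have "rGamma (- real n - 1) = 0"
    by (simp only: rGamma_nonpos_Int[OF minus_of_nat_in_nonpos_Ints])
  then have "row_coef (real n) g = 0"
    unfolding g by (simp add: row_coef_closed_form)
  moreover have "(n + 1) choose k > 0"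
    using assms g by simp
  ultimately show ?thesis
    by (simp add: row_coef_def g gbinomial_of_nat_add_1)
qed

lemma binomial_times_div_fact:
  "real (q choose k) * (a / fact q) = (if k \<le> q then a / fact (q - k) / fact k else 0)"
  by (simp add: binomial_fact binomial_eq_0 field_simps)

lemma column_sum_of_nat_le:
  assumes "p \<le> k"
  shows "(\<Sum>m\<le>n + 2. real ((m + Suc p) choose Suc k) * (inner_coef (real n) m / fact (m + Suc p)))
    = (-1) ^ (n + (k - p)) * inner_coef (real n) (k - p) / fact (Suc k)"
proof -
  define d where "d = k - p"
  have "(\<Sum>m\<le>n + 2. real ((m + Suc p) choose Suc k) * (inner_coef (real n) m / fact (m + Suc p)))
      = (\<Sum>m\<le>n + 2. if d \<le> m then inner_coef (real n) m / fact (m - d) / fact (Suc k) else 0)"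
  proof (rule sum.cong[OF refl])
    fix m
    have "(Suc k \<le> m + Suc p) = (d \<le> m)" "m + Suc p - Suc k = m - d"
      using assms by (auto simp: d_def)
    then show "real ((m + Suc p) choose Suc k) * (inner_coef (real n) m / fact (m + Suc p))
        = (if d \<le> m then inner_coef (real n) m / fact (m - d) / fact (Suc k) else 0)"
      unfolding binomial_times_div_fact by (simp only:)
  qed
  also have "\<dots> = (\<Sum>m\<in>{m\<in>{..n + 2}. d \<le> m}. inner_coef (real n) m / fact (m - d) / fact (Suc k))"
    by (simp only: sum.inter_filter[OF finite_atMost])
  also have "{m\<in>{..n + 2}. d \<le> m} = {d..n + 2}"
    by auto
  also have "(\<Sum>m=d..n + 2. inner_coef (real n) m / fact (m - d) / fact (Suc k))
      = (-1) ^ (n + d) * inner_coef (real n) d / fact (Suc k)"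
    by (simp only: inner_coef_of_nat_shifted_sum flip: sum_divide_distrib)
  finally show ?thesis
    by (simp only: d_def)
qed

lemma column_sum_of_nat_gt:
  assumes "k < p" "p \<le> n + 1"
  shows "(\<Sum>m\<le>n + 2. real ((m + Suc p) choose Suc k) * (inner_coef (real n) m / fact (m + Suc p))) = 0"
proof -
  have "(\<Sum>m\<le>n + 2. real ((m + Suc p) choose Suc k) * (inner_coef (real n) m / fact (m + Suc p)))
      = (\<Sum>m\<le>n + 2. inner_coef (real n) m / fact (m + (p - k)) / fact (Suc k))"
  proof (rule sum.cong[OF refl])
    fix m
    have "Suc k \<le> m + Suc p" "m + Suc p - Suc k = m + (p - k)"
      using assms by auto
    then show "real ((m + Suc p) choose Suc k) * (inner_coef (real n) m / fact (m + Suc p))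
        = inner_coef (real n) m / fact (m + (p - k)) / fact (Suc k)"
      unfolding binomial_times_div_fact by (simp only: if_True)
  qed
  also have "\<dots> = inner_sum (real n) (p - k) / fact (Suc k)"
  proof -
    have "p - k \<ge> 1"
      using assms by simp
    then show ?thesis
      unfolding inner_sum_of_nat[OF \<open>p - k \<ge> 1\<close>] by (simp only: sum_divide_distrib)
  qed
  also have "\<dots> = 0"
    using assms by (simp add: inner_sum_of_nat_eq_0)
  finally show ?thesis .
qed

lemma binomial_double_term_row_sum_of_nat:
  assumes "p \<le> n + 1"
  shows "(\<Sum>m\<le>n + 2. real ((m + Suc p) choose Suc k) * double_term (real n) x p m)
    = (if p \<le> k then (-1) ^ (n + Suc k) * double_term (real n) (- x) p (k - p) else 0)"
proof -
  have "(\<Sum>m\<le>n + 2. real ((m + Suc p) choose Suc k) * double_term (real n) x p m)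
      = real ((n + 1) choose p) * x ^ Suc p
        * (\<Sum>m\<le>n + 2. real ((m + Suc p) choose Suc k) * (inner_coef (real n) m / fact (m + Suc p)))"
    unfolding sum_distrib_left
    by (rule sum.cong[OF refl]) (simp add: double_term_def gbinomial_of_nat_add_1 mult_ac)
  also have "\<dots> = (if p \<le> k then (-1) ^ (n + Suc k) * double_term (real n) (- x) p (k - p) else 0)"
  proof (cases "p \<le> k")
    case True
    then obtain d where d: "k = p + d"
      using le_iff_add by auto
    have "n + Suc k + Suc p = (n + d) + 2 * Suc p"
      by (simp add: d)
    then have "(-1::real) ^ (n + Suc k) * (-1) ^ Suc p = (-1) ^ ((n + d) + 2 * Suc p)"
      by (metis power_add)
    also have "\<dots> = (-1) ^ (n + (k - p))"
      by (simp add: d power_add power_mult)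
    finally have sign: "(-1::real) ^ (n + (k - p)) = (-1) ^ (n + Suc k) * (-1) ^ Suc p" ..
    have "k - p + Suc p = Suc k"
      by (simp add: d)
    with True show ?thesis
      unfolding column_sum_of_nat_le[OF True] double_term_def gbinomial_of_nat_add_1 sign power_minus[of x]
      by (simp only: if_True mult_ac times_divide_eq_right)
  next
    case False
    then show ?thesis
      using column_sum_of_nat_gt[of k p n] assms by simp
  qed
  finally show ?thesis .
qed

lemma binomial_double_term_sum_of_nat:
  "(\<Sum>p\<le>n + 1. \<Sum>m\<le>n + 2. real ((m + Suc p) choose Suc k) * double_term (real n) x p m)
    = - ((-1) ^ (n + Suc k) * a_coef (real n) (Suc k) (- x))"
proof -
  have "(\<Sum>p\<le>n + 1. \<Sum>m\<le>n + 2. real ((m + Suc p) choose Suc k) * double_term (real n) x p m)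
      = (\<Sum>p\<le>n + 1. if p \<le> k then (-1) ^ (n + Suc k) * double_term (real n) (- x) p (k - p) else 0)"
    by (rule sum.cong[OF refl], rule binomial_double_term_row_sum_of_nat) simp
  also have "\<dots> = (\<Sum>p\<le>n + 1 + k. if p \<le> k then (-1) ^ (n + Suc k) * double_term (real n) (- x) p (k - p) else 0)"
    by (rule sum.mono_neutral_left) (auto simp: double_term_def gbinomial_of_nat_add_1)
  also have "\<dots> = (\<Sum>p\<in>{p\<in>{..n + 1 + k}. p \<le> k}. (-1) ^ (n + Suc k) * double_term (real n) (- x) p (k - p))"
    by (rule sum.inter_filter[symmetric]) simp
  also have "{p\<in>{..n + 1 + k}. p \<le> k} = {..k}"
    by auto
  also have "(\<Sum>p\<le>k. (-1) ^ (n + Suc k) * double_term (real n) (- x) p (k - p))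
      = - ((-1) ^ (n + Suc k) * a_coef (real n) (Suc k) (- x))"
    by (simp add: a_coef_antidiagonal sum_distrib_left)
  finally show ?thesis .
qed

lemma binomial_a_coef_sums_of_nat:
  assumes "k \<ge> 1"
  shows "(\<lambda>i. real ((i + k) choose k) * a_coef (real n) (i + k) x) sums ((-1) ^ (n + k) * a_coef (real n) k (- x))"
proof -
  obtain k0 where k: "k = Suc k0"
    using assms by (cases k) auto
  define g where "g p m = real ((m + Suc p) choose k) * double_term (real n) x p m" for p m
  have outside: "g p m = 0" if "(p, m) \<notin> {..n + 1} \<times> {..n + 2}" for p m
  proof -
    from that consider "n + 1 < p" | "n + 2 < m"
      by fastforce
    then show ?thesis
      by cases (simp_all add: g_def double_term_def gbinomial_of_nat_add_1 inner_coef_of_nat_eq_0)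
  qed
  have "(\<Sum>(p, m)\<in>{..n + 1} \<times> {..n + 2}. g p m) = - ((-1) ^ (n + k) * a_coef (real n) k (- x))"
    unfolding sum.cartesian_product[symmetric] g_def k by (rule binomial_double_term_sum_of_nat)
  then have "((\<lambda>(p, m). g p m) has_sum - ((-1) ^ (n + k) * a_coef (real n) k (- x))) UNIV"
    by (intro has_sum_finite_neutralI[where B = "{..n + 1} \<times> {..n + 2}"]) (use outside in auto)
  then have "(\<lambda>q. \<Sum>p\<le>q. g p (q - p)) sums - ((-1) ^ (n + k) * a_coef (real n) k (- x))"
    by (rule sums_antidiagonal)
  moreover have "(\<Sum>p\<le>q. g p (q - p)) = - (real (Suc q choose k) * a_coef (real n) (Suc q) x)" for q
  proof -
    have "(\<Sum>p\<le>q. g p (q - p)) = (\<Sum>p\<le>q. real (Suc q choose k) * double_term (real n) x p (q - p))"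
      by (rule sum.cong[OF refl]) (simp add: g_def)
    then show ?thesis
      by (simp add: a_coef_antidiagonal sum_distrib_left)
  qed
  ultimately have "(\<lambda>q. - (real (Suc q choose k) * a_coef (real n) (Suc q) x)) sums - ((-1) ^ (n + k) * a_coef (real n) k (- x))"
    by simp
  from sums_minus[OF this]
  have "(\<lambda>q. real (Suc q choose k) * a_coef (real n) (Suc q) x) sums ((-1) ^ (n + k) * a_coef (real n) k (- x))"
    by simp
  moreover have "real (Suc q choose k) * a_coef (real n) (Suc q) x = 0" if "q < k0" for q
    using that by (simp add: k binomial_eq_0 del: binomial_Suc_Suc)
  ultimately have "(\<lambda>i. real (Suc (i + k0) choose k) * a_coef (real n) (Suc (i + k0)) x) sums ((-1) ^ (n + k) * a_coef (real n) k (- x))"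
    by (subst sums_zero_iff_shift)
  then show ?thesis
    by (simp add: k)
qed

theorem theorem2:
  fixes \<alpha> x :: real
  assumes "\<alpha> > -1"
  shows "((\<lambda>i. a_coef \<alpha> (Suc i) x) sums
           (- (sin (pi * \<alpha>) / pi) * (x / ((\<alpha> + 2) * (\<alpha> + 3))) * hyp1F1 1 (\<alpha> + 4) (- x))) \<and>
         (\<forall>(n::nat) (k::nat). \<alpha> = real n \<and> k \<ge> 1 \<longrightarrow>
           (\<lambda>i. real ((i + k) choose k) * a_coef \<alpha> (i + k) x) sums ((-1) ^ (n + k) * a_coef \<alpha> k (- x)))"
proof (intro conjI allI impI)
  show "(\<lambda>i. a_coef \<alpha> (Suc i) x) sums
      (- (sin (pi * \<alpha>) / pi) * (x / ((\<alpha> + 2) * (\<alpha> + 3))) * hyp1F1 1 (\<alpha> + 4) (- x))"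
    by (rule a_coef_sums_of_row_series[OF assms row_series_sums[OF assms]])
next
  fix n k :: nat
  assume "\<alpha> = real n \<and> k \<ge> 1"
  then show "(\<lambda>i. real ((i + k) choose k) * a_coef \<alpha> (i + k) x) sums ((-1) ^ (n + k) * a_coef \<alpha> k (- x))"
    using binomial_a_coef_sums_of_nat by blast
qed

end
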